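(* Let $1\le n\le N$, $k\ge0$ and $L_0>8\mathrm r_0$. If the $n$-particle cubes $\Lambda^{(n)}_{L_k}(\mathbf u)$ and $\Lambda^{(n)}_{L_k}(\mathbf v)$ are both fully interactive and $\|\mathbf u-\mathbf v\|\ge 11nL_k$, then they are completely separable. Moreover, the random operators $\mathbf H^{(n)}_{\Lambda^{(n)}_{L_k}(\mathbf u)}$ and $\mathbf H^{(n)}_{\Lambda^{(n)}_{L_k}(\mathbf v)}$ are independent.
   Context: Points of $\mathbb Z^{nd}$ are $\mathbf x=(x_1,\dots,x_n)$, $x_j\in\mathbb Z^d$, with $\|x_j\|=\max_i|x_j^{(i)}|$, $\|\mathbf x\|=\max_j\|x_j\|$, $\langle x\rangle=\max\{1,\|x\|\}$. Cubes $\Lambda^{(n)}_L(\mathbf u)=\{\mathbf x\in\mathbb Z^{nd}:\|\mathbf x-\mathbf u\|\le L\}$; $L_k=L_0^{4^k}$. Projections: $\Pi_j\mathbf x=x_j$, $\Pi\Lambda=\bigcup_{j=1}^n\Pi_j\Lambda\subset\mathbb Z^d$. The random $n$-particle operator is $\mathbf H^{(n)}_\omega=\frac1g(\mathbf T+\mathbf U)+\mathbf V(\cdot,\omega)$ on $\ell^2(\mathbb Z^{nd})$ with $g\ne0$: $\mathbf T(\mathbf x,\mathbf y)=\langle y_j-x_j\rangle^{-r}$ if there is $j$ with $x_i=y_i$ for all $i\ne j$, else $0$; $\mathbf U(\mathbf x)=\sum_{j_1<j_2}U(x_{j_1},x_{j_2})$ with $U$ bounded symmetric and $U(x,x')=0$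 if $\|x-x'\|\ge\mathrm r_0$ ($\mathrm r_0\ge1$); $\mathbf V(\mathbf x,\omega)=\sum_jV(x_j,\omega)$ with $V(x,\omega)$, $x\in\mathbb Z^d$, i.i.d. real random variables. $\mathbf H^{(n)}_\Lambda$ denotes the restriction of $\mathbf H^{(n)}_\omega$ to $\Lambda$ (the matrix $(\mathbf H^{(n)}_\omega(\mathbf x,\mathbf y))_{\mathbf x,\mathbf y\in\Lambda}$). A cube $\Lambda^{(n)}_L(\mathbf u)$ is fully interactive if $\min_{x\in\mathbb Z^d}\max_{1\le j\le n}\|u_j-x\|\le2n(L+\mathrm r_0)$. Two cubes $\Lambda^{(n)}_L(\mathbf u),\Lambda^{(n)}_L(\mathbf v)$ are completely separable if $\Pi\Lambda^{(n)}_{L+\mathrm r_0}(\mathbf u)\cap\Pi\Lambda^{(n)}_{L+\mathrm r_0}(\mathbf v)=\emptyset$. *)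

theory Defs
  imports "HOL-Probability.Probability"
begin

text \<open>Points of Z^d are int^'d (d = CARD('d)); an n-particle configuration in Z^{nd}
  is a function nat => int^'d whose entries with index j >= n are 0 (particles are
  indexed 0..n-1).\<close>

type_synonym 'd site = "int ^ 'd"
type_synonym 'd conf = "nat \<Rightarrow> int ^ 'd"

definition snorm :: "('d::finite) site \<Rightarrow> int" where
  "snorm x = Max ((\<lambda>i. \<bar>x $ i\<bar>) ` UNIV)"

definition bracket :: "('d::finite) site \<Rightarrow> int" where
  "bracket x = max 1 (snorm x)"

definition is_conf :: "nat \<Rightarrow> ('d::finite) conf \<Rightarrow> bool" where
  "is_conf n x \<longleftrightarrow> (\<forall>j\<ge>n. x j = 0)"

definition cnorm :: "nat \<Rightarrow> ('d::finite) conf \<Rightarrow> int" where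
  "cnorm n x = Max ((\<lambda>j. snorm (x j)) ` {..<n})"

definition cube :: "nat \<Rightarrow> real \<Rightarrow> ('d::finite) conf \<Rightarrow> ('d::finite) conf set" where
  "cube n L u = {x. is_conf n x \<and> real_of_int (cnorm n (\<lambda>j. x j - u j)) \<le> L}"

definition proj :: "nat \<Rightarrow> ('d::finite) conf set \<Rightarrow> 'd site set" where
  "proj n A = (\<Union>j<n. (\<lambda>x. x j) ` A)"

definition fully_interactive :: "nat \<Rightarrow> real \<Rightarrow> real \<Rightarrow> ('d::finite) conf \<Rightarrow> bool" where
  "fully_interactive n r0 L u \<longleftrightarrow>
     (\<exists>x::'d site. real_of_int (Max ((\<lambda>j. snorm (u j - x)) ` {..<n})) \<le> 2 * real n * (L + r0))"

definition completely_separable :: "nat \<Rightarrow> real \<Rightarrow> real \<Rightarrow> ('d::finite) conf \<Rightarrow> 'd conf \<Rightarrow> bool" where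
  "completely_separable n r0 L u v \<longleftrightarrow>
     proj n (cube n (L + r0) u) \<inter> proj n (cube n (L + r0) v) = {}"

definition hopT :: "nat \<Rightarrow> real \<Rightarrow> ('d::finite) conf \<Rightarrow> 'd conf \<Rightarrow> real" where
  "hopT n r x y =
     (if \<exists>j<n. \<forall>i<n. i \<noteq> j \<longrightarrow> x i = y i
      then (let j = (SOME j. j < n \<and> (\<forall>i<n. i \<noteq> j \<longrightarrow> x i = y i))
            in real_of_int (bracket (y j - x j)) powr (- r))
      else 0)"

definition interU :: "nat \<Rightarrow> ('d site \<Rightarrow> 'd site \<Rightarrow> real) \<Rightarrow> ('d::finite) conf \<Rightarrow> real" where
  "interU n U x = (\<Sum>j2<n. \<Sum>j1<j2. U (x j1) (x j2))"

definition Hmat :: "nat \<Rightarrow> real \<Rightarrow> real \<Rightarrow> ('d site \<Rightarrow> 'd site \<Rightarrow> real)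
                    \<Rightarrow> ('d site \<Rightarrow> 'w \<Rightarrow> real) \<Rightarrow> ('d::finite) conf \<Rightarrow> 'd conf \<Rightarrow> 'w \<Rightarrow> real" where
  "Hmat n g r U V x y \<omega> =
     (1 / g) * (hopT n r x y + (if x = y then interU n U x else 0))
     + (if x = y then (\<Sum>j<n. V (x j) \<omega>) else 0)"

definition Hrestr :: "nat \<Rightarrow> real \<Rightarrow> real \<Rightarrow> ('d site \<Rightarrow> 'd site \<Rightarrow> real)
                    \<Rightarrow> ('d site \<Rightarrow> 'w \<Rightarrow> real) \<Rightarrow> ('d::finite) conf set \<Rightarrow> 'w \<Rightarrow> ('d conf \<times> 'd conf \<Rightarrow> real)" where
  "Hrestr n g r U V \<Lambda> \<omega> = restrict (\<lambda>(x, y). Hmat n g r U V x y \<omega>) (\<Lambda> \<times> \<Lambda>)"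

definition matspace :: "('d::finite) conf set \<Rightarrow> ('d conf \<times> 'd conf \<Rightarrow> real) measure" where
  "matspace \<Lambda> = PiM (\<Lambda> \<times> \<Lambda>) (\<lambda>_. borel)"

end

theory Submission
  imports Defs
begin

text \<open>A fully interactive cube has all particles within \<open>2n(L + r\<^sub>0)\<close> of one site, so its
  configuration has diameter at most \<open>4n(L + r\<^sub>0)\<close>, and every point of the projection of the
  enlarged cube lies within \<open>L + r\<^sub>0\<close> of one of its particles. A site shared by the projections
  of both enlarged cubes would therefore link \<open>u\<^sub>j\<close> to \<open>v\<^sub>j\<close> by a path of length at most
  \<open>(8n + 2)(L + r\<^sub>0)\<close> (just \<open>2(L + r\<^sub>0)\<close> when \<open>n = 1\<close>), which is less than \<open>11nL\<close> as
  \<open>r\<^sub>0 < L/8\<close>. Independence follows because \<open>H\<^sub>\<Lambda>\<close> depends on \<open>\<omega>\<close> only through the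
  values of \<open>V\<close> on \<open>\<Pi>\<Lambda>\<close>, and these are disjoint families of i.i.d. variables.\<close>

lemma snorm_component_le: "\<bar>x $ i\<bar> \<le> snorm (x :: ('d::finite) site)"
  unfolding snorm_def by (rule Max_ge) auto

lemma snorm_leI: "(\<And>i. \<bar>x $ i\<bar> \<le> c) \<Longrightarrow> snorm (x :: ('d::finite) site) \<le> c"
  unfolding snorm_def by (subst Max_le_iff) auto

lemma snorm_zero [simp]: "snorm (0 :: ('d::finite) site) = 0"
  unfolding snorm_def by simp

lemma snorm_triangle: "snorm (a - c) \<le> snorm (a - b) + snorm (b - (c :: ('d::finite) site))"
proof (rule snorm_leI)
  fix i
  have "\<bar>(a - c) $ i\<bar> \<le> \<bar>(a - b) $ i\<bar> + \<bar>(b - c) $ i\<bar>" by simp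
  also have "\<dots> \<le> snorm (a - b) + snorm (b - c)" by (intro add_mono snorm_component_le)
  finally show "\<bar>(a - c) $ i\<bar> \<le> snorm (a - b) + snorm (b - c)" .
qed

lemma snorm_minus_commute: "snorm (a - b) = snorm (b - (a :: ('d::finite) site))"
  unfolding snorm_def by (metis abs_minus_commute vector_minus_component)

lemma cnorm_ge: "j < n \<Longrightarrow> snorm (x j) \<le> cnorm n x"
  unfolding cnorm_def by (rule Max_ge) auto

lemma cnorm_attained:
  assumes "1 \<le> n"
  obtains j where "j < n" "cnorm n x = snorm (x j)"
proof -
  have "cnorm n x \<in> (\<lambda>j. snorm (x j)) ` {..<n}"
    unfolding cnorm_def using assms by (intro Max_in) (auto simp: lessThan_empty_iff)
  then show ?thesis using that by auto
qed

lemma fully_interactive_diameter: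
  assumes "fully_interactive n r0 L u" "i < n" "a < n"
  shows "real_of_int (snorm (u i - u a)) \<le> 4 * real n * (L + r0)"
proof -
  obtain x where x: "real_of_int (Max ((\<lambda>j. snorm (u j - x)) ` {..<n})) \<le> 2 * real n * (L + r0)"
    using assms(1) unfolding fully_interactive_def by blast
  have near: "real_of_int (snorm (u j - x)) \<le> 2 * real n * (L + r0)" if "j < n" for j
  proof -
    have "snorm (u j - x) \<le> Max ((\<lambda>j. snorm (u j - x)) ` {..<n})"
      using that by (intro Max_ge) auto
    with x show ?thesis by linarith
  qed
  have "snorm (u i - u a) \<le> snorm (u i - x) + snorm (u a - x)"
    using snorm_triangle[of "u i" "u a" x] snorm_minus_commute[of x "u a"] by linarith
  with near[OF assms(2)] near[OF assms(3)] show ?thesis by linarith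
qed

lemma mem_proj_cube:
  assumes "z \<in> proj n (cube n R u)"
  obtains a where "a < n" "real_of_int (snorm (z - u a)) \<le> R"
proof -
  obtain a w where a: "a < n" "w \<in> cube n R u" "z = w a"
    using assms unfolding proj_def by auto
  have "snorm (w a - u a) \<le> cnorm n (\<lambda>j. w j - u j)"
    using cnorm_ge[OF \<open>a < n\<close>, of "\<lambda>j. w j - u j"] by simp
  with a that show ?thesis unfolding cube_def by force
qed

lemma proj_cube_mono: "R \<le> R' \<Longrightarrow> proj n (cube n R u) \<subseteq> proj n (cube n R' u)"
  unfolding proj_def cube_def by fastforce

lemma proj_cubes_disjoint:
  fixes u v :: "('d::finite) conf"
  assumes "1 \<le> n"
    and diam_u: "\<And>i a. i < n \<Longrightarrow> a < n \<Longrightarrow> real_of_int (snorm (u i - u a)) \<le> D"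
    and diam_v: "\<And>i b. i < n \<Longrightarrow> b < n \<Longrightarrow> real_of_int (snorm (v i - v b)) \<le> D"
    and far: "real_of_int (cnorm n (\<lambda>j. u j - v j)) > 2 * D + 2 * R"
  shows "proj n (cube n R u) \<inter> proj n (cube n R v) = {}"
proof (rule ccontr)
  assume "proj n (cube n R u) \<inter> proj n (cube n R v) \<noteq> {}"
  then obtain z where "z \<in> proj n (cube n R u)" "z \<in> proj n (cube n R v)" by blast
  then obtain a b where a: "a < n" "real_of_int (snorm (z - u a)) \<le> R"
    and b: "b < n" "real_of_int (snorm (z - v b)) \<le> R"
    by (metis mem_proj_cube)
  obtain j where j: "j < n" "cnorm n (\<lambda>j. u j - v j) = snorm (u j - v j)"
    using cnorm_attained[OF \<open>1 \<le> n\<close>] by blast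
  have "snorm (u j - v j) \<le> snorm (u j - u a) + snorm (u a - z) + snorm (z - v b) + snorm (v b - v j)"
    using snorm_triangle[of "u j" "v j" "u a"] snorm_triangle[of "u a" "v j" z]
      snorm_triangle[of z "v j" "v b"] by linarith
  also have "\<dots> = snorm (u j - u a) + snorm (z - u a) + snorm (z - v b) + snorm (v j - v b)"
    using snorm_minus_commute by metis
  finally have "real_of_int (snorm (u j - v j)) \<le> 2 * D + 2 * R"
    using diam_u[OF j(1) a(1)] diam_v[OF j(1) b(1)] a(2) b(2) by linarith
  with far j(2) show False by simp
qed

lemma fully_interactive_completely_separable:
  fixes u v :: "('d::finite) conf"
  assumes "1 \<le> n" "r0 \<ge> 1" "L > 8 * r0"
    and "fully_interactive n r0 L u" "fully_interactive n r0 L v"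
    and far: "real_of_int (cnorm n (\<lambda>j. u j - v j)) \<ge> 11 * real n * L"
  shows "completely_separable n r0 L u v"
proof (cases "n = 1")
  case True
  have "2 * 0 + 2 * (L + r0) < 11 * real n * L"
    using True assms(2,3) by simp
  with far True show ?thesis
    unfolding completely_separable_def by (intro proj_cubes_disjoint[where D = 0]) auto
next
  case False
  then have "real n \<ge> 2" using assms(1) by simp
  have "2 * (4 * real n * (L + r0)) + 2 * (L + r0) < 11 * real n * L"
  proof -
    have "(8 * real n + 2) * r0 < (8 * real n + 2) * (L / 8)"
      using assms(3) \<open>real n \<ge> 2\<close> by (intro mult_strict_left_mono) auto
    moreover have "(9 / 4) * L \<le> 2 * real n * L"
      using \<open>real n \<ge> 2\<close> assms(2,3) by (intro mult_right_mono) auto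
    ultimately show ?thesis by (simp add: algebra_simps)
  qed
  with far show ?thesis
    unfolding completely_separable_def using assms(1,4,5)
    by (intro proj_cubes_disjoint[where D = "4 * real n * (L + r0)"])
       (auto simp: fully_interactive_diameter)
qed

text \<open>\<open>Hrestr n g r U (\<lambda>z (_::unit). W z) \<Lambda> ()\<close> is \<open>H\<^sub>\<Lambda>\<close> for the fixed potential \<open>W\<close>,
  viewed as a random potential over the one-point sample space.\<close>

lemma Hrestr_eq_restricted_potential:
  "Hrestr n g r U V \<Lambda>
     = (\<lambda>W. Hrestr n g r U (\<lambda>z (_::unit). W z) \<Lambda> ()) \<circ> (\<lambda>\<omega>. restrict (\<lambda>z. V z \<omega>) (proj n \<Lambda>))"
proof
  fix \<omega>
  have sum_eq: "(\<Sum>j<n. V (w j) \<omega>) = (\<Sum>j<n. restrict (\<lambda>z. V z \<omega>) (proj n \<Lambda>) (w j))"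
    if "w \<in> \<Lambda>" for w
    using that unfolding proj_def by (intro sum.cong) auto
  show "Hrestr n g r U V \<Lambda> \<omega> = ((\<lambda>W. Hrestr n g r U (\<lambda>z _. W z) \<Lambda> ()) \<circ> (\<lambda>\<omega>. restrict (\<lambda>z. V z \<omega>) (proj n \<Lambda>))) \<omega>"
    unfolding Hrestr_def comp_def
  proof (rule restrict_ext)
    fix p assume "p \<in> \<Lambda> \<times> \<Lambda>"
    then obtain x y where "p = (x, y)" "x \<in> \<Lambda>" "y \<in> \<Lambda>" by auto
    then show "(case p of (x, y) \<Rightarrow> Hmat n g r U V x y \<omega>)
      = (case p of (x, y) \<Rightarrow> Hmat n g r U (\<lambda>z _. restrict (\<lambda>z. V z \<omega>) (proj n \<Lambda>) z) x y ())"
      unfolding Hmat_def by (simp add: sum_eq)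
  qed
qed

lemma Hrestr_measurable_in_potential:
  "(\<lambda>W. Hrestr n g r U (\<lambda>z (_::unit). W z) \<Lambda> ())
     \<in> measurable (PiM (proj n \<Lambda>) (\<lambda>_. borel)) (matspace \<Lambda>)"
  unfolding matspace_def Hrestr_def
proof (rule measurable_restrict)
  fix p assume "p \<in> \<Lambda> \<times> \<Lambda>"
  then obtain x y where p: "p = (x, y)" "x \<in> \<Lambda>" by auto
  have "(\<lambda>W. W (x j) :: real) \<in> borel_measurable (PiM (proj n \<Lambda>) (\<lambda>_. borel))" if "j < n" for j
    using that p(2) unfolding proj_def by (intro measurable_component_singleton) auto
  then have "(\<lambda>W. \<Sum>j<n. W (x j) :: real) \<in> borel_measurable (PiM (proj n \<Lambda>) (\<lambda>_. borel))"
    by (intro borel_measurable_sum) auto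
  then show "(\<lambda>W. case p of (x, y) \<Rightarrow> Hmat n g r U (\<lambda>z _. W z) x y ())
      \<in> borel_measurable (PiM (proj n \<Lambda>) (\<lambda>_. borel))"
    unfolding p(1) Hmat_def by (cases "x = y") auto
qed

lemma (in prob_space) Hrestr_indep_var:
  assumes "indep_vars (\<lambda>_. borel) V UNIV"
    and "proj n \<Lambda>\<^sub>1 \<inter> proj n \<Lambda>\<^sub>2 = {}"
  shows "indep_var (matspace \<Lambda>\<^sub>1) (Hrestr n g r U V \<Lambda>\<^sub>1) (matspace \<Lambda>\<^sub>2) (Hrestr n g r U V \<Lambda>\<^sub>2)"
proof -
  have "indep_var
      (matspace \<Lambda>\<^sub>1) ((\<lambda>W. Hrestr n g r U (\<lambda>z _. W z) \<Lambda>\<^sub>1 ()) \<circ> (\<lambda>\<omega>. restrict (\<lambda>z. V z \<omega>) (proj n \<Lambda>\<^sub>1)))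
      (matspace \<Lambda>\<^sub>2) ((\<lambda>W. Hrestr n g r U (\<lambda>z _. W z) \<Lambda>\<^sub>2 ()) \<circ> (\<lambda>\<omega>. restrict (\<lambda>z. V z \<omega>) (proj n \<Lambda>\<^sub>2)))"
    using assms Hrestr_measurable_in_potential
    by (intro indep_var_compose[OF indep_var_restrict]) auto
  then show ?thesis
    by (simp only: Hrestr_eq_restricted_potential[of n g r U V])
qed

theorem lemma3p7:
  fixes M :: "'w measure"
    and V :: "('d::finite) site \<Rightarrow> 'w \<Rightarrow> real"
    and U :: "'d site \<Rightarrow> 'd site \<Rightarrow> real"
    and g r r0 L0 :: real and n N k :: nat and u v :: "'d conf"
  assumes "prob_space M"
    and "prob_space.indep_vars M (\<lambda>_. borel) V UNIV"
    and "\<forall>x y. distr M borel (V x) = distr M borel (V y)"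
    and "g \<noteq> 0"
    and "\<exists>B. \<forall>x y. \<bar>U x y\<bar> \<le> B"
    and "\<forall>x y. U x y = U y x"
    and "\<forall>x y. real_of_int (snorm (x - y)) \<ge> r0 \<longrightarrow> U x y = 0"
    and "r0 \<ge> 1"
    and "1 \<le> n" and "n \<le> N"
    and "L0 > 8 * r0"
    and "is_conf n u" and "is_conf n v"
    and "fully_interactive n r0 (L0 ^ (4 ^ k)) u"
    and "fully_interactive n r0 (L0 ^ (4 ^ k)) v"
    and "real_of_int (cnorm n (\<lambda>j. u j - v j)) \<ge> 11 * real n * L0 ^ (4 ^ k)"
  shows "completely_separable n r0 (L0 ^ (4 ^ k)) u v
     \<and> prob_space.indep_var M
         (matspace (cube n (L0 ^ (4 ^ k)) u)) (Hrestr n g r U V (cube n (L0 ^ (4 ^ k)) u))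
         (matspace (cube n (L0 ^ (4 ^ k)) v)) (Hrestr n g r U V (cube n (L0 ^ (4 ^ k)) v))"
proof -
  interpret prob_space M by fact
  define L where "L = L0 ^ (4 ^ k)"
  have "L0 ^ 1 \<le> L0 ^ (4 ^ k)"
    using assms(8,11) by (intro power_increasing) auto
  then have "L > 8 * r0" using assms(11) unfolding L_def by simp
  then have sep: "completely_separable n r0 L u v"
    using assms(8,9,14-16) unfolding L_def by (intro fully_interactive_completely_separable)
  moreover have "proj n (cube n L u) \<inter> proj n (cube n L v) = {}"
    using sep proj_cube_mono[of L "L + r0" n] assms(8)
    unfolding completely_separable_def by fastforce
  ultimately show ?thesis
    using Hrestr_indep_var[OF assms(2)] unfolding L_def by blast
qed

end
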